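(* Let $\Omega\subseteq\mathbb R^d$ be a nonempty open set, $A\in\mathcal A(\Omega)$, $b,c\in L^\infty(\Omega;\mathbb C^d)$, $V\in L^1_{\rm loc}(\Omega)$ nonnegative. Let $1<r<p<\infty$ and $q=p/(p-1)$. Then: (i) $(A,b,c,V)\in\mathcal S_p(\Omega)$ if and only if $(A^*,c,b,V)\in\mathcal S_q(\Omega)$, where $A^*$ is the pointwise conjugate transpose. (ii) $\mathcal S_r(\Omega)\cap\mathcal S_p(\Omega)\subseteq\mathcal S_s(\Omega)$ for all $s\in[r,p]$. In particular, $\{\mathcal B_p(\Omega):p\in[2,\infty)\}$ is a decreasing chain, i.e. $\mathcal B_{p'}(\Omega)\subseteq\mathcal B_p(\Omega)$ whenever $2\le p\le p'<\infty$.
   Context: $\langle \xi,\sigma\rangle=\sum_j\xi_j\overline{\sigma_j}$. $\mathcal{A}(\Omega)$: measurable $A:\Omega\to\mathbb{C}^{d\times d}$ with $\lambda,\Lambda>0$ such that $\Re\langle A(x)\xi,\xi\rangle\ge\lambda|\xi|^2$, $|\langle A(x)\xi,\sigma\rangle|\le\Lambda|\xi||\sigma|$ a.e. $\mathcal{J}_s\xi=\frac s2(\xi+(1-\frac2s)\overline\xi)$. $\Delta_s(A)=\operatorname{ess\,inf}_{x}\min_{|\xi|=1}\Re\langle A(x)\xi,\xi+|1-2/s|\overline\xi\rangle$, $\mathcal A_s(\Omega)=\{A\in\mathcal A(\Omega):\Delta_s(A)>0\}$. $\Gamma_s^{(A,b,c,V)}(x,\xi)=\Re\langle A(x)\xi,\mathcal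 J_s\xi\rangle+\Re\langle b(x)+\mathcal J_sc(x),\xi\rangle+V(x)$. $\mathcal S_s(\Omega)$: quadruples $(A,b,c,V)$ ($A\in\mathcal A(\Omega)$, $b,c\in L^\infty(\Omega;\mathbb C^d)$, $0\le V\in L^1_{\rm loc}$) with $A\in\mathcal A_s(\Omega)$, $|b-c|\le M\sqrt V$ a.e. for some $M>0$, and $\Gamma_s(x,\xi)\ge\mu(|\xi|^2+V(x))$ for a.e. $x$, all $\xi$, for some $\mu>0$. $\mathcal B_p(\Omega)=\mathcal S_p(\Omega)\cap\mathcal S_{p/(p-1)}(\Omega)$. *)

theory Defs
  imports "HOL-Analysis.Analysis"
begin

text \<open>Points of \<Omega> live in real^'d, coefficient vectors in complex^'d,
  matrices in complex^'d^'d; the dimension d is CARD('d).\<close>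

type_synonym ('d) cmat_field = "real^'d \<Rightarrow> complex^'d^'d"
type_synonym ('d) cvec_field = "real^'d \<Rightarrow> complex^'d"

definition cinner :: "complex^'d \<Rightarrow> complex^'d \<Rightarrow> complex" where
  "cinner \<xi> \<sigma> = (\<Sum>j\<in>UNIV. \<xi>$j * cnj (\<sigma>$j))"

definition cconj :: "complex^'d \<Rightarrow> complex^'d" where
  "cconj \<xi> = (\<chi> j. cnj (\<xi>$j))"

definition conj_transpose :: "complex^'d^'d \<Rightarrow> complex^'d^'d" where
  "conj_transpose M = (\<chi> i j. cnj (M$j$i))"

definition ellA :: "(real^'d) set \<Rightarrow> ('d cmat_field) set" where
  "ellA \<Omega> = {A. A \<in> borel_measurable (lebesgue_on \<Omega>) \<and>
     (\<exists>lam Lam. lam > 0 \<and> Lam > 0 \<and>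
        (AE x in lebesgue_on \<Omega>.
           (\<forall>\<xi>. Re (cinner (A x *v \<xi>) \<xi>) \<ge> lam * (norm \<xi>)\<^sup>2) \<and>
           (\<forall>\<xi> \<sigma>. cmod (cinner (A x *v \<xi>) \<sigma>) \<le> Lam * norm \<xi> * norm \<sigma>)))}"

definition Jop :: "real \<Rightarrow> complex^'d \<Rightarrow> complex^'d" where
  "Jop s \<xi> = complex_of_real (s/2) *s (\<xi> + complex_of_real (1 - 2/s) *s cconj \<xi>)"

text \<open>\<Delta>_s(A) = ess inf over x of min over unit \<xi> of
  Re<A(x)\<xi>, \<xi> + |1-2/s| conj \<xi>>; the essential infimum of g is
  sup {t. g \<ge> t a.e.} (taken in ereal).\<close>
definition Delta :: "real \<Rightarrow> (real^'d) set \<Rightarrow> 'd cmat_field \<Rightarrow> ereal" where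
  "Delta s \<Omega> A = (SUP t \<in> {t::real. AE x in lebesgue_on \<Omega>.
      (\<forall>\<xi>::complex^'d. norm \<xi> = 1 \<longrightarrow>
         t \<le> Re (cinner (A x *v \<xi>) (\<xi> + complex_of_real \<bar>1 - 2/s\<bar> *s cconj \<xi>)))}. ereal t)"

definition ellA_s :: "real \<Rightarrow> (real^'d) set \<Rightarrow> ('d cmat_field) set" where
  "ellA_s s \<Omega> = {A \<in> ellA \<Omega>. Delta s \<Omega> A > 0}"

definition Gamma ::
  "real \<Rightarrow> 'd cmat_field \<Rightarrow> 'd cvec_field \<Rightarrow> 'd cvec_field \<Rightarrow> (real^'d \<Rightarrow> real)
     \<Rightarrow> real^'d \<Rightarrow> complex^'d \<Rightarrow> real" where
  "Gamma s A b c V x \<xi> = Re (cinner (A x *v \<xi>) (Jop s \<xi>))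
      + Re (cinner (b x + Jop s (c x)) \<xi>) + V x"

definition Linf :: "(real^'d) set \<Rightarrow> ('d cvec_field) set" where
  "Linf \<Omega> = {b. b \<in> borel_measurable (lebesgue_on \<Omega>) \<and>
      (\<exists>M. AE x in lebesgue_on \<Omega>. norm (b x) \<le> M)}"

definition L1loc_nonneg :: "(real^'d) set \<Rightarrow> (real^'d \<Rightarrow> real) set" where
  "L1loc_nonneg \<Omega> = {V. V \<in> borel_measurable (lebesgue_on \<Omega>) \<and>
      (\<forall>K. compact K \<and> K \<subseteq> \<Omega> \<longrightarrow> integrable (lebesgue_on K) V) \<and>
      (AE x in lebesgue_on \<Omega>. 0 \<le> V x)}"

definition S_class :: "real \<Rightarrow> (real^'d) set \<Rightarrow>
   ('d cmat_field \<times> 'd cvec_field \<times> 'd cvec_field \<times> (real^'d \<Rightarrow> real)) set" where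
  "S_class s \<Omega> = {(A,b,c,V). A \<in> ellA \<Omega> \<and> b \<in> Linf \<Omega> \<and> c \<in> Linf \<Omega> \<and>
      V \<in> L1loc_nonneg \<Omega> \<and> A \<in> ellA_s s \<Omega> \<and>
      (\<exists>M>0. AE x in lebesgue_on \<Omega>. norm (b x - c x) \<le> M * sqrt (V x)) \<and>
      (\<exists>\<mu>>0. AE x in lebesgue_on \<Omega>. \<forall>\<xi>.
          Gamma s A b c V x \<xi> \<ge> \<mu> * ((norm \<xi>)\<^sup>2 + V x))}"

definition B_class :: "real \<Rightarrow> (real^'d) set \<Rightarrow>
   ('d cmat_field \<times> 'd cvec_field \<times> 'd cvec_field \<times> (real^'d \<Rightarrow> real)) set" where
  "B_class p \<Omega> = S_class p \<Omega> \<inter> S_class (p/(p-1)) \<Omega>"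

end

theory Submission
  imports Defs
begin

(* Regard complex^d as a real inner product space: Re <u, v> is the real inner product,
   conjugation is a self-adjoint isometric involution, and J_s is self-adjoint.

   (i) For conjugate exponents J_p J_q = id, hence the form Gamma_q of (A*, c, b, V) at eta
   equals the form Gamma_p of (A, b, c, V) at J_q eta; since |J_q eta| >= kappa |eta| with
   kappa > 0, coercivity transfers. As |1 - 2/q| = |1 - 2/p| =: K, positivity of Delta
   transfers to A* via the substitution xi = eta + K conj eta, using that multiplication by i
   turns the Delta-form with parameter K into the one with parameter -K.

   (ii) Gamma_s is affine in s, and the Delta-form is affine in K = |1 - 2/s|, which for
   s in [r, p] lies between 0 (where ellipticity gives the bound) and |1 - 2/r| or |1 - 2/p|.
   An affine function bounded below at both ends of an interval is bounded below in between.
   The chain property follows because p |-> p/(p-1) maps [2, oo) onto (1, 2], reversing order. *)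

lemma affine_lower_bound_between:
  fixes a b m r s p :: real
  assumes "r \<le> s" "s \<le> p" "m \<le> r * a + b" "m \<le> p * a + b"
  shows "m \<le> s * a + b"
proof (cases "a \<ge> 0")
  case True
  then have "r * a \<le> s * a"
    using assms by (intro mult_right_mono) auto
  then show ?thesis
    using assms by linarith
next
  case False
  then have "p * a \<le> s * a"
    using assms by (intro mult_right_mono_neg) auto
  then show ?thesis
    using assms by linarith
qed

section \<open>Complex vectors as a real inner product space\<close>

lemma of_real_smult_eq_scaleR: "complex_of_real a *s (x::complex^'n) = a *\<^sub>R x"
proof -
  have "(a *\<^sub>R x) $ i = complex_of_real a * x $ i" for i
    by (simp only: vector_scaleR_component) (simp add: scaleR_conv_of_real)
  then show ?thesis
    by (simp add: vec_eq_iff del: vector_scaleR_component)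
qed

lemma Re_cinner: "Re (cinner u v) = inner u v"
  by (simp add: cinner_def inner_vec_def inner_complex_def Re_sum)

lemma cinner_conj_transpose: "cinner (conj_transpose M *v \<xi>) \<sigma> = cnj (cinner (M *v \<sigma>) \<xi>)"
  unfolding cinner_def conj_transpose_def matrix_vector_mult_def
  by (simp add: sum_distrib_left sum_distrib_right mult_ac) (subst sum.swap, simp add: mult_ac)

lemma conj_transpose_conj_transpose [simp]: "conj_transpose (conj_transpose M) = M"
  by (simp add: conj_transpose_def vec_eq_iff)

lemma linear_conj_transpose: "linear conj_transpose"
  by (rule linearI) (simp_all add: conj_transpose_def vec_eq_iff flip: of_real_smult_eq_scaleR)

lemma cconj_add: "cconj (x + y) = cconj x + cconj y"
  by (simp add: cconj_def vec_eq_iff)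

lemma cconj_diff: "cconj (x - y) = cconj x - cconj y"
  by (simp add: cconj_def vec_eq_iff)

lemma cconj_smult: "cconj (a *s x) = cnj a *s cconj x"
  by (simp add: cconj_def vec_eq_iff)

lemma cconj_scaleR: "cconj (a *\<^sub>R x) = a *\<^sub>R cconj x"
  by (simp add: cconj_smult flip: of_real_smult_eq_scaleR)

lemma cconj_cconj [simp]: "cconj (cconj x) = x"
  by (simp add: cconj_def vec_eq_iff)

lemma inner_cconj_left: "inner (cconj u) v = inner u (cconj v)"
  by (simp add: cconj_def inner_vec_def inner_complex_def)

lemma norm_cconj [simp]: "norm (cconj x) = norm x"
  by (simp add: norm_eq_sqrt_inner inner_cconj_left)

lemma inner_ii_smult: "inner (\<i> *s u) (\<i> *s (v::complex^'n)) = inner u v"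
  by (simp add: inner_vec_def inner_complex_def algebra_simps)

lemma norm_ii_smult [simp]: "norm (\<i> *s (u::complex^'n)) = norm u"
  by (simp add: norm_eq_sqrt_inner inner_ii_smult)

lemma matrix_vector_mult_complex_scaleR: "(M::complex^'n^'m) *v (a *\<^sub>R x) = a *\<^sub>R (M *v x)"
  by (simp flip: of_real_smult_eq_scaleR add: vector_scalar_commute)

section \<open>The ellipticity form and the classes A_s\<close>

text \<open>Delta_s is the essential infimum of this form over unit vectors, with K = |1 - 2/s|.\<close>

definition delta_form :: "real \<Rightarrow> complex^'n^'n \<Rightarrow> complex^'n \<Rightarrow> real" where
  "delta_form K M \<xi> = inner (M *v \<xi>) (\<xi> + K *\<^sub>R cconj \<xi>)"

lemma delta_form_eq_Re_cinner:
  "delta_form K M \<xi> = Re (cinner (M *v \<xi>) (\<xi> + complex_of_real K *s cconj \<xi>))"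
  by (simp add: delta_form_def Re_cinner of_real_smult_eq_scaleR)

lemma delta_form_affine: "delta_form K M \<xi> = K * inner (M *v \<xi>) (cconj \<xi>) + delta_form 0 M \<xi>"
  by (simp add: delta_form_def inner_add_right)

lemma delta_form_scaleR: "delta_form K M (a *\<^sub>R \<xi>) = a\<^sup>2 * delta_form K M \<xi>"
  by (simp add: delta_form_def matrix_vector_mult_complex_scaleR cconj_scaleR
      inner_add_right power2_eq_square algebra_simps)

lemma delta_form_ii_smult: "delta_form K M (\<i> *s \<xi>) = delta_form (-K) M \<xi>"
proof -
  have "\<i> *s \<xi> + K *\<^sub>R cconj (\<i> *s \<xi>) = \<i> *s (\<xi> + (-K) *\<^sub>R cconj \<xi>)"
    by (simp add: cconj_smult vector_ssub_ldistrib vector_sadd_rdistrib algebra_simps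
        flip: of_real_smult_eq_scaleR)
  then show ?thesis
    unfolding delta_form_def by (simp only: vector_scalar_commute inner_ii_smult)
qed

lemma delta_form_conj_transpose:
  "delta_form K (conj_transpose M) \<eta> = inner (M *v (\<eta> + K *\<^sub>R cconj \<eta>)) \<eta>"
  unfolding delta_form_def by (simp only: flip: Re_cinner) (simp add: cinner_conj_transpose)

lemma delta_form_lower_bound_iff_unit_sphere:
  "(\<forall>\<xi>. norm \<xi> = 1 \<longrightarrow> t \<le> delta_form K M \<xi>) \<longleftrightarrow> (\<forall>\<xi>. t * (norm \<xi>)\<^sup>2 \<le> delta_form K M \<xi>)"
proof safe
  fix \<xi> :: "complex^'a"
  assume unit: "\<forall>\<xi>. norm \<xi> = 1 \<longrightarrow> t \<le> delta_form K M \<xi>"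
  show "t * (norm \<xi>)\<^sup>2 \<le> delta_form K M \<xi>"
  proof (cases "\<xi> = 0")
    case True
    then show ?thesis by (simp add: delta_form_def)
  next
    case False
    then have "t \<le> delta_form K M (sgn \<xi>)"
      using unit by (simp add: norm_sgn)
    then have "(norm \<xi>)\<^sup>2 * t \<le> (norm \<xi>)\<^sup>2 * delta_form K M (sgn \<xi>)"
      by (simp add: mult_left_mono)
    also have "\<dots> = delta_form K M (norm \<xi> *\<^sub>R sgn \<xi>)"
      by (simp only: delta_form_scaleR)
    also have "norm \<xi> *\<^sub>R sgn \<xi> = \<xi>"
      using False by (simp add: sgn_div_norm)
    finally show ?thesis
      by (simp add: mult.commute)
  qed
qed (metis mult.right_neutral power_one)

lemma Delta_pos_iff:
  "Delta s \<Omega> A > 0 \<longleftrightarrow>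
    (\<exists>t>0. AE x in lebesgue_on \<Omega>. \<forall>\<xi>. t * (norm \<xi>)\<^sup>2 \<le> delta_form \<bar>1 - 2/s\<bar> (A x) \<xi>)"
proof -
  have unit_sphere: "(\<forall>\<xi>. norm \<xi> = 1 \<longrightarrow>
        t \<le> Re (cinner (A x *v \<xi>) (\<xi> + complex_of_real \<bar>1 - 2/s\<bar> *s cconj \<xi>)))
      \<longleftrightarrow> (\<forall>\<xi>. t * (norm \<xi>)\<^sup>2 \<le> delta_form \<bar>1 - 2/s\<bar> (A x) \<xi>)" for t x
    unfolding delta_form_eq_Re_cinner[symmetric] by (rule delta_form_lower_bound_iff_unit_sphere)
  show ?thesis
    unfolding Delta_def less_SUP_iff unit_sphere ereal_less(2) by blast
qed

lemma ellA_s_iff: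
  "A \<in> ellA_s s \<Omega> \<longleftrightarrow> A \<in> ellA \<Omega> \<and>
    (\<exists>t>0. AE x in lebesgue_on \<Omega>. \<forall>\<xi>. t * (norm \<xi>)\<^sup>2 \<le> delta_form \<bar>1 - 2/s\<bar> (A x) \<xi>)"
  by (simp add: ellA_s_def Delta_pos_iff)

lemma ellA_elliptic:
  assumes "A \<in> ellA \<Omega>"
  obtains lam where "lam > 0" "AE x in lebesgue_on \<Omega>. \<forall>\<xi>. lam * (norm \<xi>)\<^sup>2 \<le> delta_form 0 (A x) \<xi>"
proof -
  obtain lam Lam where "lam > 0" and bounds: "AE x in lebesgue_on \<Omega>.
      (\<forall>\<xi>. Re (cinner (A x *v \<xi>) \<xi>) \<ge> lam * (norm \<xi>)\<^sup>2) \<and>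
      (\<forall>\<xi> \<sigma>. cmod (cinner (A x *v \<xi>) \<sigma>) \<le> Lam * norm \<xi> * norm \<sigma>)"
    using assms unfolding ellA_def by blast
  from bounds have "AE x in lebesgue_on \<Omega>. \<forall>\<xi>. lam * (norm \<xi>)\<^sup>2 \<le> delta_form 0 (A x) \<xi>"
    by eventually_elim (simp add: delta_form_def Re_cinner)
  with \<open>lam > 0\<close> show ?thesis
    by (rule that)
qed

lemma ellA_conj_transpose:
  assumes "A \<in> ellA \<Omega>"
  shows "(\<lambda>x. conj_transpose (A x)) \<in> ellA \<Omega>"
proof -
  obtain lam Lam where "lam > 0" "Lam > 0" and bounds: "AE x in lebesgue_on \<Omega>.
      (\<forall>\<xi>. Re (cinner (A x *v \<xi>) \<xi>) \<ge> lam * (norm \<xi>)\<^sup>2) \<and>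
      (\<forall>\<xi> \<sigma>. cmod (cinner (A x *v \<xi>) \<sigma>) \<le> Lam * norm \<xi> * norm \<sigma>)"
    using assms unfolding ellA_def by blast
  from bounds have "AE x in lebesgue_on \<Omega>.
      (\<forall>\<xi>. Re (cinner (conj_transpose (A x) *v \<xi>) \<xi>) \<ge> lam * (norm \<xi>)\<^sup>2) \<and>
      (\<forall>\<xi> \<sigma>. cmod (cinner (conj_transpose (A x) *v \<xi>) \<sigma>) \<le> Lam * norm \<xi> * norm \<sigma>)"
    by eventually_elim (simp add: cinner_conj_transpose, metis mult.assoc mult.commute)
  moreover have "continuous_on UNIV (conj_transpose :: complex^'n^'n \<Rightarrow> _)"
    using linear_conj_transpose linear_continuous_on linear_conv_bounded_linear by blast
  then have "(\<lambda>x. conj_transpose (A x)) \<in> borel_measurable (lebesgue_on \<Omega>)"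
    using assms borel_measurable_continuous_on unfolding ellA_def by blast
  ultimately show ?thesis
    using \<open>lam > 0\<close> \<open>Lam > 0\<close> unfolding ellA_def by blast
qed

text \<open>With xi = eta + K conj eta one has xi - K conj xi = (1 - K^2) eta, and the form with
  parameter -K at xi is the form with parameter K at i xi.\<close>

lemma delta_form_conj_transpose_lower_bound:
  fixes M :: "complex^'n^'n"
  assumes K: "0 \<le> K" "K < 1" and "0 \<le> t"
    and bound: "\<forall>\<xi>. t * (norm \<xi>)\<^sup>2 \<le> delta_form K M \<xi>"
  shows "t * (1 - K) / (1 + K) * (norm \<eta>)\<^sup>2 \<le> delta_form K (conj_transpose M) \<eta>"
proof -
  define \<xi> where "\<xi> = \<eta> + K *\<^sub>R cconj \<eta>"
  have "norm \<eta> \<le> norm \<xi> + K * norm \<eta>"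
    using norm_triangle_ineq4[of \<xi> "K *\<^sub>R cconj \<eta>"] K by (simp add: \<xi>_def)
  moreover have "K * norm \<eta> \<le> norm \<eta>"
    using K by (simp add: mult_left_le_one_le)
  ultimately have "t * ((1 - K) * norm \<eta>)\<^sup>2 \<le> t * (norm (\<i> *s \<xi>))\<^sup>2"
    using K \<open>0 \<le> t\<close> by (intro mult_left_mono power_mono) (auto simp: algebra_simps)
  also have "\<dots> \<le> delta_form (-K) M \<xi>"
    using bound[rule_format, of "\<i> *s \<xi>"] by (simp only: delta_form_ii_smult)
  also have "\<xi> + (-K) *\<^sub>R cconj \<xi> = (1 - K\<^sup>2) *\<^sub>R \<eta>"
    by (simp add: \<xi>_def cconj_add cconj_scaleR algebra_simps power2_eq_square)
  then have "delta_form (-K) M \<xi> = inner (M *v \<xi>) ((1 - K\<^sup>2) *\<^sub>R \<eta>)"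
    unfolding delta_form_def by (simp only:)
  also have "\<dots> = (1 - K) * (1 + K) * delta_form K (conj_transpose M) \<eta>"
    unfolding delta_form_conj_transpose \<xi>_def[symmetric] inner_scaleR_right
    by (simp add: power2_eq_square algebra_simps)
  finally show ?thesis
    using K by (simp add: divide_le_eq power_mult_distrib power2_eq_square mult_ac)
qed

lemma abs_one_minus_two_div_conjugate:
  fixes p q :: real
  assumes "p > 1" "q = p / (p - 1)"
  shows "\<bar>1 - 2/q\<bar> = \<bar>1 - 2/p\<bar>"
proof -
  have "1 - 2/q = - (1 - 2/p)"
    using assms(1) unfolding assms(2) by (simp add: field_simps)
  then show ?thesis
    by simp
qed

lemma ellA_s_conj_transpose:
  assumes p: "p > 1" "q = p / (p - 1)" and A: "A \<in> ellA_s p \<Omega>"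
  shows "(\<lambda>x. conj_transpose (A x)) \<in> ellA_s q \<Omega>"
proof -
  define K where "K = \<bar>1 - 2/p\<bar>"
  have K: "0 \<le> K" "K < 1"
    using p by (auto simp: K_def abs_if field_simps)
  obtain t where "t > 0" and bound: "AE x in lebesgue_on \<Omega>. \<forall>\<xi>. t * (norm \<xi>)\<^sup>2 \<le> delta_form K (A x) \<xi>"
    using A unfolding ellA_s_iff K_def by blast
  from bound have "AE x in lebesgue_on \<Omega>.
      \<forall>\<eta>. t * (1 - K) / (1 + K) * (norm \<eta>)\<^sup>2 \<le> delta_form K (conj_transpose (A x)) \<eta>"
    by eventually_elim
      (blast intro: delta_form_conj_transpose_lower_bound[OF K less_imp_le[OF \<open>t > 0\<close>]])
  moreover have "t * (1 - K) / (1 + K) > 0"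
    using K \<open>t > 0\<close> by simp
  moreover have "(\<lambda>x. conj_transpose (A x)) \<in> ellA \<Omega>"
    using A by (simp add: ellA_s_iff ellA_conj_transpose)
  ultimately show ?thesis
    unfolding ellA_s_iff abs_one_minus_two_div_conjugate[OF p] K_def[symmetric] by blast
qed

section \<open>The operator J_s and the form Gamma_s\<close>

lemma Jop_eq_scaleR: "Jop s \<xi> = (s/2) *\<^sub>R (\<xi> + (1 - 2/s) *\<^sub>R cconj \<xi>)"
  by (simp only: Jop_def of_real_smult_eq_scaleR)

lemma Jop_affine: "s \<noteq> 0 \<Longrightarrow> Jop s \<xi> = s *\<^sub>R ((1/2) *\<^sub>R (\<xi> + cconj \<xi>)) - cconj \<xi>"
  unfolding Jop_eq_scaleR by (simp add: algebra_simps)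

lemma inner_Jop_commute: "inner (Jop s u) v = inner u (Jop s v)"
  unfolding Jop_eq_scaleR by (simp add: inner_add_left inner_add_right inner_cconj_left)

lemma Jop_Jop_conjugate:
  assumes "p > 1" "q = p / (p - 1)"
  shows "Jop p (Jop q \<eta>) = \<eta>"
proof -
  define k where "k = 1 - 2/p"
  have "1 - 2/q = - k" and pq: "(p/2) * (q/2) * (1 - k\<^sup>2) = 1"
    using assms(1) unfolding assms(2) k_def by (simp_all add: field_simps power2_eq_square)
  then have Jq: "Jop q \<eta> = (q/2) *\<^sub>R (\<eta> - k *\<^sub>R cconj \<eta>)"
    and cJq: "cconj (Jop q \<eta>) = (q/2) *\<^sub>R (cconj \<eta> - k *\<^sub>R \<eta>)"
    by (simp_all add: Jop_eq_scaleR cconj_add cconj_diff cconj_scaleR)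
  have "Jop q \<eta> + k *\<^sub>R cconj (Jop q \<eta>) = ((q/2) * (1 - k\<^sup>2)) *\<^sub>R \<eta>"
    by (subst cJq, subst Jq) (simp add: scaleR_right_diff_distrib scaleR_left_diff_distrib
        right_diff_distrib diff_divide_distrib power2_eq_square ac_simps)
  then have "Jop p (Jop q \<eta>) = ((p/2) * (q/2) * (1 - k\<^sup>2)) *\<^sub>R \<eta>"
    unfolding Jop_eq_scaleR[of p] k_def[symmetric] by (simp add: mult.assoc)
  then show ?thesis
    using pq by simp
qed

lemma norm_Jop_lower_bound:
  assumes "s > 1"
  shows "(s/2) * (1 - \<bar>1 - 2/s\<bar>) * norm \<eta> \<le> norm (Jop s \<eta>)"
proof -
  have "norm \<eta> - \<bar>1 - 2/s\<bar> * norm \<eta> \<le> norm (\<eta> + (1 - 2/s) *\<^sub>R cconj \<eta>)"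
    using norm_diff_ineq[of \<eta> "(1 - 2/s) *\<^sub>R cconj \<eta>"] by (simp only: norm_scaleR norm_cconj)
  then have "(s/2) * ((1 - \<bar>1 - 2/s\<bar>) * norm \<eta>) \<le> (s/2) * norm (\<eta> + (1 - 2/s) *\<^sub>R cconj \<eta>)"
    using assms by (intro mult_left_mono) (auto simp: left_diff_distrib)
  then show ?thesis
    using assms unfolding Jop_eq_scaleR norm_scaleR by (simp add: mult.assoc)
qed

lemma Gamma_conj_transpose:
  assumes "p > 1" "q = p / (p - 1)"
  shows "Gamma q (\<lambda>x. conj_transpose (A x)) c b V x \<eta> = Gamma p A b c V x (Jop q \<eta>)"
proof -
  have "Gamma q (\<lambda>x. conj_transpose (A x)) c b V x \<eta> =
      inner (A x *v Jop q \<eta>) \<eta> + inner (c x) \<eta> + inner (Jop q (b x)) \<eta> + V x"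
    by (simp add: Gamma_def cinner_conj_transpose Re_cinner inner_add_left)
  also have "\<dots> = inner (A x *v Jop q \<eta>) (Jop p (Jop q \<eta>)) + inner (c x) (Jop p (Jop q \<eta>))
      + inner (b x) (Jop q \<eta>) + V x"
    by (simp add: Jop_Jop_conjugate[OF assms] inner_Jop_commute)
  also have "\<dots> = Gamma p A b c V x (Jop q \<eta>)"
    by (simp add: Gamma_def Re_cinner inner_add_left inner_Jop_commute)
  finally show ?thesis .
qed

lemma Gamma_affine:
  assumes "s \<noteq> 0"
  shows "Gamma s A b c V x \<xi> =
    s * (inner (A x *v \<xi>) ((1/2) *\<^sub>R (\<xi> + cconj \<xi>)) + inner ((1/2) *\<^sub>R (c x + cconj (c x))) \<xi>)
    + (V x + inner (b x) \<xi> - inner (cconj (c x)) \<xi> - inner (A x *v \<xi>) (cconj \<xi>))"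
  using assms
  by (simp add: Gamma_def Re_cinner Jop_affine inner_add_left inner_add_right inner_diff_left
      inner_diff_right algebra_simps del: scaleR_add_right)

lemma Gamma_lower_bound_between:
  assumes "0 < r" "r \<le> s" "s \<le> p"
    and "m \<le> Gamma r A b c V x \<xi>" "m \<le> Gamma p A b c V x \<xi>"
  shows "m \<le> Gamma s A b c V x \<xi>"
  using assms affine_lower_bound_between[of r s p m]
  by (simp add: Gamma_affine)

section \<open>The classes S_s and B_p\<close>

definition Gamma_coercive ::
  "real \<Rightarrow> (real^'d) set \<Rightarrow> 'd cmat_field \<Rightarrow> 'd cvec_field \<Rightarrow> 'd cvec_field \<Rightarrow> (real^'d \<Rightarrow> real)
     \<Rightarrow> bool" where
  "Gamma_coercive s \<Omega> A b c V \<longleftrightarrow>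
    (\<exists>\<mu>>0. AE x in lebesgue_on \<Omega>. \<forall>\<xi>. \<mu> * ((norm \<xi>)\<^sup>2 + V x) \<le> Gamma s A b c V x \<xi>)"

lemma S_class_iff:
  "(A, b, c, V) \<in> S_class s \<Omega> \<longleftrightarrow>
    A \<in> ellA_s s \<Omega> \<and> b \<in> Linf \<Omega> \<and> c \<in> Linf \<Omega> \<and> V \<in> L1loc_nonneg \<Omega> \<and>
    (\<exists>M>0. AE x in lebesgue_on \<Omega>. norm (b x - c x) \<le> M * sqrt (V x)) \<and>
    Gamma_coercive s \<Omega> A b c V"
  by (auto simp: S_class_def ellA_s_def Gamma_coercive_def)

lemma Gamma_coercive_conj_transpose:
  assumes p: "p > 1" "q = p / (p - 1)"
    and V: "AE x in lebesgue_on \<Omega>. 0 \<le> V x"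
    and "Gamma_coercive p \<Omega> A b c V"
  shows "Gamma_coercive q \<Omega> (\<lambda>x. conj_transpose (A x)) c b V"
proof -
  obtain \<mu> where "\<mu> > 0"
    and coercive: "AE x in lebesgue_on \<Omega>. \<forall>\<xi>. \<mu> * ((norm \<xi>)\<^sup>2 + V x) \<le> Gamma p A b c V x \<xi>"
    using assms(4) unfolding Gamma_coercive_def by blast
  define \<kappa> where "\<kappa> = (q/2) * (1 - \<bar>1 - 2/q\<bar>)"
  have "q > 1"
    using p(1) unfolding p(2) by (simp add: field_simps)
  then have "\<kappa> > 0"
    by (auto simp: \<kappa>_def abs_if field_simps)
  have "AE x in lebesgue_on \<Omega>. \<forall>\<eta>.
      \<mu> * min (\<kappa>\<^sup>2) 1 * ((norm \<eta>)\<^sup>2 + V x) \<le> Gamma q (\<lambda>x. conj_transpose (A x)) c b V x \<eta>"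
    using coercive V
  proof eventually_elim
    case (elim x)
    show ?case
    proof
      fix \<eta> :: "complex^'a"
      have "\<kappa> * norm \<eta> \<le> norm (Jop q \<eta>)"
        using norm_Jop_lower_bound[OF \<open>q > 1\<close>] by (simp add: \<kappa>_def)
      then have "\<kappa>\<^sup>2 * (norm \<eta>)\<^sup>2 \<le> (norm (Jop q \<eta>))\<^sup>2"
        using \<open>\<kappa> > 0\<close> power_mono[of "\<kappa> * norm \<eta>" _ 2] by (simp add: power_mult_distrib)
      moreover have "min (\<kappa>\<^sup>2) 1 * (norm \<eta>)\<^sup>2 \<le> \<kappa>\<^sup>2 * (norm \<eta>)\<^sup>2"
        by (intro mult_right_mono) auto
      moreover have "min (\<kappa>\<^sup>2) 1 * V x \<le> V x"
        using elim(2) by (simp add: mult_left_le_one_le)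
      ultimately have "min (\<kappa>\<^sup>2) 1 * ((norm \<eta>)\<^sup>2 + V x) \<le> (norm (Jop q \<eta>))\<^sup>2 + V x"
        by (simp add: distrib_left)
      then have "\<mu> * min (\<kappa>\<^sup>2) 1 * ((norm \<eta>)\<^sup>2 + V x) \<le> \<mu> * ((norm (Jop q \<eta>))\<^sup>2 + V x)"
        using \<open>\<mu> > 0\<close> by (simp add: mult.assoc)
      also have "\<dots> \<le> Gamma p A b c V x (Jop q \<eta>)"
        using elim(1) by blast
      also have "\<dots> = Gamma q (\<lambda>x. conj_transpose (A x)) c b V x \<eta>"
        by (rule Gamma_conj_transpose[OF p, symmetric])
      finally show "\<mu> * min (\<kappa>\<^sup>2) 1 * ((norm \<eta>)\<^sup>2 + V x)
          \<le> Gamma q (\<lambda>x. conj_transpose (A x)) c b V x \<eta>" .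
    qed
  qed
  moreover have "\<mu> * min (\<kappa>\<^sup>2) 1 > 0"
    using \<open>\<mu> > 0\<close> \<open>\<kappa> > 0\<close> by simp
  ultimately show ?thesis
    unfolding Gamma_coercive_def by blast
qed

lemma Gamma_coercive_between:
  assumes "0 < r" "r \<le> s" "s \<le> p"
    and V: "AE x in lebesgue_on \<Omega>. 0 \<le> V x"
    and "Gamma_coercive r \<Omega> A b c V" "Gamma_coercive p \<Omega> A b c V"
  shows "Gamma_coercive s \<Omega> A b c V"
proof -
  obtain \<mu>r \<mu>p where "\<mu>r > 0" "\<mu>p > 0"
    and coercive_r: "AE x in lebesgue_on \<Omega>. \<forall>\<xi>. \<mu>r * ((norm \<xi>)\<^sup>2 + V x) \<le> Gamma r A b c V x \<xi>"
    and coercive_p: "AE x in lebesgue_on \<Omega>. \<forall>\<xi>. \<mu>p * ((norm \<xi>)\<^sup>2 + V x) \<le> Gamma p A b c V x \<xi>"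
    using assms(5,6) unfolding Gamma_coercive_def by blast
  define \<mu> where "\<mu> = min \<mu>r \<mu>p"
  from coercive_r coercive_p V
  have "AE x in lebesgue_on \<Omega>. \<forall>\<xi>. \<mu> * ((norm \<xi>)\<^sup>2 + V x) \<le> Gamma s A b c V x \<xi>"
  proof eventually_elim
    case (elim x)
    show ?case
    proof
      fix \<xi> :: "complex^'a"
      have "\<mu> * ((norm \<xi>)\<^sup>2 + V x) \<le> \<mu>r * ((norm \<xi>)\<^sup>2 + V x)"
        and "\<mu> * ((norm \<xi>)\<^sup>2 + V x) \<le> \<mu>p * ((norm \<xi>)\<^sup>2 + V x)"
        using elim(3) by (auto simp: \<mu>_def intro: mult_right_mono)
      then show "\<mu> * ((norm \<xi>)\<^sup>2 + V x) \<le> Gamma s A b c V x \<xi>"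
        using elim(1,2) Gamma_lower_bound_between[OF assms(1-3)] by (meson order_trans)
    qed
  qed
  moreover have "\<mu> > 0"
    using \<open>\<mu>r > 0\<close> \<open>\<mu>p > 0\<close> by (simp add: \<mu>_def)
  ultimately show ?thesis
    unfolding Gamma_coercive_def by blast
qed

lemma ellA_s_mono:
  fixes \<Omega> :: "(real^'d) set"
  assumes "\<bar>1 - 2/s\<bar> \<le> \<bar>1 - 2/r\<bar>"
  shows "ellA_s r \<Omega> \<subseteq> ellA_s s \<Omega>"
proof
  fix A
  assume A: "A \<in> ellA_s r \<Omega>"
  then obtain lam where "lam > 0"
    and elliptic: "AE x in lebesgue_on \<Omega>. \<forall>\<xi>. lam * (norm \<xi>)\<^sup>2 \<le> delta_form 0 (A x) \<xi>"
    using ellA_elliptic unfolding ellA_s_iff by blast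
  obtain t where "t > 0"
    and bound: "AE x in lebesgue_on \<Omega>. \<forall>\<xi>. t * (norm \<xi>)\<^sup>2 \<le> delta_form \<bar>1 - 2/r\<bar> (A x) \<xi>"
    using A unfolding ellA_s_iff by blast
  from elliptic bound have "AE x in lebesgue_on \<Omega>.
      \<forall>\<xi>. min lam t * (norm \<xi>)\<^sup>2 \<le> delta_form \<bar>1 - 2/s\<bar> (A x) \<xi>"
  proof eventually_elim
    case (elim x)
    show ?case
    proof
      fix \<xi> :: "complex^'d"
      let ?m = "min lam t * (norm \<xi>)\<^sup>2" and ?a = "inner (A x *v \<xi>) (cconj \<xi>)"
      have "?m \<le> lam * (norm \<xi>)\<^sup>2" "?m \<le> t * (norm \<xi>)\<^sup>2"
        by (simp_all add: mult_right_mono)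
      moreover have "lam * (norm \<xi>)\<^sup>2 \<le> delta_form 0 (A x) \<xi>"
        and "t * (norm \<xi>)\<^sup>2 \<le> delta_form \<bar>1 - 2/r\<bar> (A x) \<xi>"
        using elim by blast+
      ultimately have endpoints: "?m \<le> 0 * ?a + delta_form 0 (A x) \<xi>" "?m \<le> \<bar>1 - 2/r\<bar> * ?a + delta_form 0 (A x) \<xi>"
        unfolding delta_form_affine[of "\<bar>1 - 2/r\<bar>"] by simp_all
      then show "?m \<le> delta_form \<bar>1 - 2/s\<bar> (A x) \<xi>"
        unfolding delta_form_affine[of "\<bar>1 - 2/s\<bar>"]
        using affine_lower_bound_between[OF _ assms endpoints] by simp
    qed
  qed
  moreover have "min lam t > 0"
    using \<open>lam > 0\<close> \<open>t > 0\<close> by simp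
  moreover have "A \<in> ellA \<Omega>"
    using A by (simp add: ellA_s_iff)
  ultimately show "A \<in> ellA_s s \<Omega>"
    unfolding ellA_s_iff by blast
qed

lemma abs_one_minus_two_div_between:
  fixes r s p :: real
  assumes "0 < r" "r \<le> s" "s \<le> p"
  shows "\<bar>1 - 2/s\<bar> \<le> \<bar>1 - 2/r\<bar> \<or> \<bar>1 - 2/s\<bar> \<le> \<bar>1 - 2/p\<bar>"
proof -
  have "2/p \<le> 2/s" "2/s \<le> 2/r"
    using assms by (simp_all add: frac_le)
  then show ?thesis
    by (auto simp: abs_if)
qed

lemma ellA_s_between:
  assumes "0 < r" "r \<le> s" "s \<le> p"
  shows "ellA_s r \<Omega> \<inter> ellA_s p \<Omega> \<subseteq> ellA_s s \<Omega>"
  using abs_one_minus_two_div_between[OF assms] ellA_s_mono by blast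

lemma S_class_conj_transpose:
  assumes p: "p > 1" "q = p / (p - 1)" and S: "(A, b, c, V) \<in> S_class p \<Omega>"
  shows "((\<lambda>x. conj_transpose (A x)), c, b, V) \<in> S_class q \<Omega>"
proof -
  have "AE x in lebesgue_on \<Omega>. 0 \<le> V x"
    using S by (simp add: S_class_iff L1loc_nonneg_def)
  moreover have "A \<in> ellA_s p \<Omega>" "Gamma_coercive p \<Omega> A b c V"
    using S by (simp_all add: S_class_iff)
  ultimately have "(\<lambda>x. conj_transpose (A x)) \<in> ellA_s q \<Omega>"
    and "Gamma_coercive q \<Omega> (\<lambda>x. conj_transpose (A x)) c b V"
    using ellA_s_conj_transpose[OF p] Gamma_coercive_conj_transpose[OF p] by blast+
  then show ?thesis
    using S by (simp add: S_class_iff norm_minus_commute)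
qed

lemma S_class_between:
  assumes "0 < r" "r \<le> s" "s \<le> p"
  shows "S_class r \<Omega> \<inter> S_class p \<Omega> \<subseteq> S_class s \<Omega>"
proof clarify
  fix A b c V
  assume "(A, b, c, V) \<in> S_class r \<Omega>" "(A, b, c, V) \<in> S_class p \<Omega>"
  moreover from this have "AE x in lebesgue_on \<Omega>. 0 \<le> V x"
    by (simp add: S_class_iff L1loc_nonneg_def)
  ultimately show "(A, b, c, V) \<in> S_class s \<Omega>"
    using ellA_s_between[OF assms] Gamma_coercive_between[OF assms]
    by (simp add: S_class_iff) blast
qed

lemma B_class_antimono:
  assumes "2 \<le> p1" "p1 \<le> p2"
  shows "B_class p2 \<Omega> \<subseteq> B_class p1 \<Omega>"
proof -
  have "0 < p2 / (p2 - 1)" "p2 / (p2 - 1) \<le> p1 / (p1 - 1)" "p1 / (p1 - 1) \<le> 2"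
    using assms by (simp_all add: field_simps)
  then show ?thesis
    using assms S_class_between[of "p2 / (p2 - 1)" p1 p2] S_class_between[of "p2 / (p2 - 1)" "p1 / (p1 - 1)" p2]
    unfolding B_class_def by auto
qed

theorem proposition3p2:
  fixes \<Omega> :: "(real^'d) set"
    and A :: "real^'d \<Rightarrow> complex^'d^'d"
    and b c :: "real^'d \<Rightarrow> complex^'d"
    and V :: "real^'d \<Rightarrow> real"
    and r p q :: real
  assumes "open \<Omega>" and "\<Omega> \<noteq> {}"
    and "A \<in> ellA \<Omega>" and "b \<in> Linf \<Omega>" and "c \<in> Linf \<Omega>"
    and "V \<in> L1loc_nonneg \<Omega>"
    and "1 < r" and "r < p" and "q = p / (p - 1)"
  shows "((A, b, c, V) \<in> S_class p \<Omega> \<longleftrightarrow>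
            ((\<lambda>x. conj_transpose (A x)), c, b, V) \<in> S_class q \<Omega>)
       \<and> (\<forall>s\<in>{r..p}. S_class r \<Omega> \<inter> S_class p \<Omega> \<subseteq> S_class s \<Omega>)
       \<and> (\<forall>p1 p2::real. 2 \<le> p1 \<and> p1 \<le> p2 \<longrightarrow> B_class p2 \<Omega> \<subseteq> B_class p1 \<Omega>)"
proof (intro conjI)
  have "p > 1"
    using assms(7,8) by simp
  moreover from this have "q > 1" "p = q / (q - 1)"
    unfolding assms(9) by (simp_all add: field_simps)
  ultimately show "(A, b, c, V) \<in> S_class p \<Omega> \<longleftrightarrow> ((\<lambda>x. conj_transpose (A x)), c, b, V) \<in> S_class q \<Omega>"
    using S_class_conj_transpose[of p q] S_class_conj_transpose[of q p] assms(9) by fastforce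
  show "\<forall>s\<in>{r..p}. S_class r \<Omega> \<inter> S_class p \<Omega> \<subseteq> S_class s \<Omega>"
  proof
    fix s
    assume "s \<in> {r..p}"
    then show "S_class r \<Omega> \<inter> S_class p \<Omega> \<subseteq> S_class s \<Omega>"
      using \<open>1 < r\<close> by (intro S_class_between) auto
  qed
  show "\<forall>p1 p2::real. 2 \<le> p1 \<and> p1 \<le> p2 \<longrightarrow> B_class p2 \<Omega> \<subseteq> B_class p1 \<Omega>"
    using B_class_antimono by blast
qed

end
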